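(* Let $F_1,F_2\in\mathbb{R}^{p\times n}$ and $L_1,L_2\in\mathbb{R}^{n\times m}$ be arbitrary and $s\ge1$. Define the block lower-triangular Toeplitz matrices $R_{s+n}\in\mathbb{R}^{(s+n)m\times(s+n)m}$ and $\bar R_{s+n}\in\mathbb{R}^{(s+n)p\times(s+n)m}$ with $(i,j)$ blocks $R_{i-j}$ and $\bar R_{i-j}$, where $R_k=CA_{L_2}^{k-1}(L_1-L_2)$ for $k\ge1$, $R_0=I_m$, $R_k=0$ for $k<0$, with $A_{L_2}=A-L_2C$, and $\bar R_k=(F_1-F_2)A_{F_1}^{k-1}L_1+F_2A_{L_2}^{k-1}(L_1-L_2)$ for $k\ge1$, $\bar R_k=0$ for $k\le 0$. Then $$\begin{bmatrix}\hat Y_s(F_1,L_1)\\ \hat X_s(F_1,L_1)\end{bmatrix}=\begin{bmatrix}M_s(F_2) & \hat Y_s(F_2,L_2)\\ N_s(F_2) & \hat X_s(F_2,L_2)\end{bmatrix}\begin{bmatrix}\bar R_{s+n}\\ R_{s+n}\end{bmatrix}.$$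
   Context: Consider the discrete-time LTI system $x(k+1)=Ax(k)+Bu(k)$, $y(k)=Cx(k)+Du(k)$ with $u\in\mathbb{R}^p$, $x\in\mathbb{R}^n$, $y\in\mathbb{R}^m$, $n\ge 1$, and $(A,B,C,D)$ a minimal realization. For $F\in\mathbb{R}^{p\times n}$ put $A_F=A+BF$ and $C_F=C+DF$. Finite-sample image representation: $M_s(F)\in\mathbb{R}^{sp\times(s+n)p}$, $N_s(F)\in\mathbb{R}^{sm\times(s+n)p}$ with $(l,j)$ blocks ($l=1,\dots,s$; $j=1,\dots,s+n$) $M_{n+l-j}$, $N_{n+l-j}$, where $M_k=FA_F^{k-1}B$ ($k\ge1$), $M_0=I_p$, $M_k=0$ ($k<0$), $N_k=C_FA_F^{k-1}B$ ($k\ge1$), $N_0=D$, $N_k=0$ ($k<0$). For gains $F,L$: $\hat Y_s(F,L)\in\mathbb{R}^{sp\times(s+n)m}$, $\hat X_s(F,L)\in\mathbb{R}^{sm\times(s+n)m}$ with $(l,j)$ blocks ($l=1,\dots,s$; $j=1,\dots,s+n$) $\hat Y_{n+l-j}$, $\hat X_{n+l-j}$, where $\hat Y_k=FA_F^{k-1}L$ ($k\ge1$), $\hat Y_k=0$ ($k\le0$), $\hat X_k=C_FA_F^{k-1}L$ ($k\ge1$), $\hat X_0=I_m$, $\hat X_k=0$ ($k<0$). *)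

theory Defs
  imports "Jordan_Normal_Form.Matrix" "Jordan_Normal_Form.DL_Rank"
begin

definition blk_toeplitz :: "nat \<Rightarrow> nat \<Rightarrow> int \<Rightarrow> nat \<Rightarrow> nat \<Rightarrow> (int \<Rightarrow> real mat) \<Rightarrow> real mat" where
  "blk_toeplitz nr nc off r c f =
     mat (nr * r) (nc * c)
       (\<lambda>(i, j). f (off + int (i div r) - int (j div c)) $$ (i mod r, j mod c))"

(* vertical stacking [P; Q] *)
definition vstack :: "real mat \<Rightarrow> real mat \<Rightarrow> real mat" where
  "vstack P Q = four_block_mat P (0\<^sub>m (dim_row P) 0) Q (0\<^sub>m (dim_row Q) 0)"

(* Controllability matrix [B, AB, ..., A^(n-1) B] (n x np) *)
definition ctrb_mat :: "nat \<Rightarrow> nat \<Rightarrow> real mat \<Rightarrow> real mat \<Rightarrow> real mat" where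
  "ctrb_mat n p A B = mat n (n * p) (\<lambda>(i, j). (A ^\<^sub>m (j div p) * B) $$ (i, j mod p))"

(* Observability matrix [C; CA; ...; C A^(n-1)] (nm x n) *)
definition obsv_mat :: "nat \<Rightarrow> nat \<Rightarrow> real mat \<Rightarrow> real mat \<Rightarrow> real mat" where
  "obsv_mat n m A C = mat (n * m) n (\<lambda>(i, j). (C * A ^\<^sub>m (i div m)) $$ (i mod m, j))"

definition controllable :: "nat \<Rightarrow> nat \<Rightarrow> real mat \<Rightarrow> real mat \<Rightarrow> bool" where
  "controllable n p A B \<longleftrightarrow> vec_space.rank n (ctrb_mat n p A B) = n"

definition observable :: "nat \<Rightarrow> nat \<Rightarrow> real mat \<Rightarrow> real mat \<Rightarrow> bool" where
  "observable n m A C \<longleftrightarrow> vec_space.rank n (transpose_mat (obsv_mat n m A C)) = n"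

definition minimal_realization ::
  "nat \<Rightarrow> nat \<Rightarrow> nat \<Rightarrow> real mat \<Rightarrow> real mat \<Rightarrow> real mat \<Rightarrow> real mat \<Rightarrow> bool" where
  "minimal_realization n p m A B C D \<longleftrightarrow>
     A \<in> carrier_mat n n \<and> B \<in> carrier_mat n p \<and> C \<in> carrier_mat m n \<and> D \<in> carrier_mat m p \<and>
     controllable n p A B \<and> observable n m A C"

definition AF :: "real mat \<Rightarrow> real mat \<Rightarrow> real mat \<Rightarrow> real mat" where
  "AF A B F = A + B * F"
definition CF :: "real mat \<Rightarrow> real mat \<Rightarrow> real mat \<Rightarrow> real mat" where
  "CF C D F = C + D * F"

definition Mk :: "nat \<Rightarrow> real mat \<Rightarrow> real mat \<Rightarrow> real mat \<Rightarrow> int \<Rightarrow> real mat" where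
  "Mk p A B F k = (if k \<ge> 1 then F * AF A B F ^\<^sub>m nat (k - 1) * B
                   else if k = 0 then 1\<^sub>m p else 0\<^sub>m p p)"
definition Nk :: "nat \<Rightarrow> nat \<Rightarrow> real mat \<Rightarrow> real mat \<Rightarrow> real mat \<Rightarrow> real mat \<Rightarrow> real mat \<Rightarrow> int \<Rightarrow> real mat" where
  "Nk m p A B C D F k = (if k \<ge> 1 then CF C D F * AF A B F ^\<^sub>m nat (k - 1) * B
                         else if k = 0 then D else 0\<^sub>m m p)"
definition Yhk :: "nat \<Rightarrow> nat \<Rightarrow> real mat \<Rightarrow> real mat \<Rightarrow> real mat \<Rightarrow> real mat \<Rightarrow> int \<Rightarrow> real mat" where
  "Yhk m p A B F L k = (if k \<ge> 1 then F * AF A B F ^\<^sub>m nat (k - 1) * L else 0\<^sub>m p m)"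
definition Xhk :: "nat \<Rightarrow> real mat \<Rightarrow> real mat \<Rightarrow> real mat \<Rightarrow> real mat \<Rightarrow> real mat \<Rightarrow> real mat \<Rightarrow> int \<Rightarrow> real mat" where
  "Xhk m A B C D F L k = (if k \<ge> 1 then CF C D F * AF A B F ^\<^sub>m nat (k - 1) * L
                          else if k = 0 then 1\<^sub>m m else 0\<^sub>m m m)"

definition Ms :: "nat \<Rightarrow> nat \<Rightarrow> nat \<Rightarrow> real mat \<Rightarrow> real mat \<Rightarrow> real mat \<Rightarrow> real mat" where
  "Ms n p s A B F = blk_toeplitz s (s + n) (int n) p p (Mk p A B F)"
definition Ns :: "nat \<Rightarrow> nat \<Rightarrow> nat \<Rightarrow> nat \<Rightarrow> real mat \<Rightarrow> real mat \<Rightarrow> real mat \<Rightarrow> real mat \<Rightarrow> real mat \<Rightarrow> real mat" where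
  "Ns n m p s A B C D F = blk_toeplitz s (s + n) (int n) m p (Nk m p A B C D F)"
definition Yhat :: "nat \<Rightarrow> nat \<Rightarrow> nat \<Rightarrow> nat \<Rightarrow> real mat \<Rightarrow> real mat \<Rightarrow> real mat \<Rightarrow> real mat \<Rightarrow> real mat" where
  "Yhat n m p s A B F L = blk_toeplitz s (s + n) (int n) p m (Yhk m p A B F L)"
definition Xhat :: "nat \<Rightarrow> nat \<Rightarrow> nat \<Rightarrow> real mat \<Rightarrow> real mat \<Rightarrow> real mat \<Rightarrow> real mat \<Rightarrow> real mat \<Rightarrow> real mat \<Rightarrow> real mat" where
  "Xhat n m s A B C D F L = blk_toeplitz s (s + n) (int n) m m (Xhk m A B C D F L)"

definition Rk :: "nat \<Rightarrow> real mat \<Rightarrow> real mat \<Rightarrow> real mat \<Rightarrow> real mat \<Rightarrow> int \<Rightarrow> real mat" where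
  "Rk m A C L1 L2 k = (if k \<ge> 1 then C * (A - L2 * C) ^\<^sub>m nat (k - 1) * (L1 - L2)
                       else if k = 0 then 1\<^sub>m m else 0\<^sub>m m m)"
definition Rbk :: "nat \<Rightarrow> nat \<Rightarrow> real mat \<Rightarrow> real mat \<Rightarrow> real mat \<Rightarrow> real mat \<Rightarrow> real mat \<Rightarrow> real mat \<Rightarrow> real mat \<Rightarrow> int \<Rightarrow> real mat" where
  "Rbk m p A B C F1 F2 L1 L2 k = (if k \<ge> 1 then
       (F1 - F2) * AF A B F1 ^\<^sub>m nat (k - 1) * L1 + F2 * (A - L2 * C) ^\<^sub>m nat (k - 1) * (L1 - L2)
     else 0\<^sub>m p m)"

end

theory Submission
  imports Defs
begin

(* Entrywise, the product of two causal block Toeplitz matrices is the block Toeplitz matrix of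
   the convolution of their symbols, so the claim reduces to two convolution identities between
   the Markov parameters.  In both, the convolution terms with b < k add up to G x_k, with G = F2
   resp. G = C_F2, where
     x_k = sum_{b<k} A_F2^(k-1-b) (B Rbar_b + L2 R_b)
   is the state of the (F2, L2) realization driven by the columns of the Toeplitz factor, i.e. the
   solution of x_(k+1) = A_F2 x_k + B Rbar_k + L2 R_k with x_0 = 0.  Its closed form
   x_k = A_F1^(k-1) L1 - A_L2^(k-1) (L1 - L2) turns both identities into ring computations. *)

lemma pow_mat_Suc_left:
  assumes "A \<in> carrier_mat n n"
  shows "A ^\<^sub>m Suc k = A * A ^\<^sub>m k"
proof (induction k)
  case (Suc k)
  have "A ^\<^sub>m Suc (Suc k) = (A * A ^\<^sub>m k) * A" using Suc by simp
  also have "\<dots> = A * A ^\<^sub>m Suc k" using assms by (simp add: assoc_mult_mat[of _ n n _ n _ n])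
  finally show ?case .
qed (use assms in simp)

definition mat_sum ::
    "nat \<Rightarrow> nat \<Rightarrow> ('b \<Rightarrow> 'a :: comm_monoid_add mat) \<Rightarrow> 'b set \<Rightarrow> 'a mat" where
  "mat_sum r c f S = mat r c (\<lambda>ij. \<Sum>b\<in>S. f b $$ ij)"

lemma mat_sum_carrier [simp]: "mat_sum r c f S \<in> carrier_mat r c"
  and dim_mat_sum [simp]: "dim_row (mat_sum r c f S) = r" "dim_col (mat_sum r c f S) = c"
  by (simp_all add: mat_sum_def)

lemma index_mat_sum [simp]:
  "i < r \<Longrightarrow> j < c \<Longrightarrow> mat_sum r c f S $$ (i, j) = (\<Sum>b\<in>S. f b $$ (i, j))"
  by (simp add: mat_sum_def)

lemma mat_sum_empty [simp]: "mat_sum r c f {} = 0\<^sub>m r c"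
  by (rule eq_matI) simp_all

lemma mat_sum_insert:
  assumes "finite S" "b \<notin> S" "f b \<in> carrier_mat r c"
  shows "mat_sum r c f (insert b S) = f b + mat_sum r c f S"
  using assms by (intro eq_matI) simp_all

lemma mat_sum_add:
  assumes "\<And>b. b \<in> S \<Longrightarrow> f b \<in> carrier_mat r c"
    and "\<And>b. b \<in> S \<Longrightarrow> g b \<in> carrier_mat r c"
  shows "mat_sum r c f S + mat_sum r c g S = mat_sum r c (\<lambda>b. f b + g b) S"
proof (rule eq_matI)
  fix i j assume "i < dim_row (mat_sum r c (\<lambda>b. f b + g b) S)"
    "j < dim_col (mat_sum r c (\<lambda>b. f b + g b) S)"
  then show "(mat_sum r c f S + mat_sum r c g S) $$ (i, j) = mat_sum r c (\<lambda>b. f b + g b) S $$ (i, j)"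
    using assms by (auto simp: sum.distrib[symmetric] intro!: sum.cong dest!: assms)
qed simp_all

lemma mat_sum_cong:
  "(\<And>b. b \<in> S \<Longrightarrow> f b = g b) \<Longrightarrow> mat_sum r c f S = mat_sum r c g S"
  unfolding mat_sum_def by (simp cong: sum.cong)

lemma mult_mat_sum:
  fixes G :: "'a :: semiring_0 mat"
  assumes "G \<in> carrier_mat q r" "finite S" "\<And>b. b \<in> S \<Longrightarrow> f b \<in> carrier_mat r c"
  shows "G * mat_sum r c f S = mat_sum q c (\<lambda>b. G * f b) S"
proof (rule eq_matI)
  fix i j assume "i < dim_row (mat_sum q c (\<lambda>b. G * f b) S)"
    "j < dim_col (mat_sum q c (\<lambda>b. G * f b) S)"
  then have ij: "i < q" "j < c" by simp_all
  have "(G * mat_sum r c f S) $$ (i, j) = (\<Sum>k<r. G $$ (i, k) * (\<Sum>b\<in>S. f b $$ (k, j)))"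
    using assms(1) ij by (simp add: scalar_prod_def lessThan_atLeast0)
  also have "\<dots> = (\<Sum>b\<in>S. \<Sum>k<r. G $$ (i, k) * f b $$ (k, j))"
    by (simp add: sum_distrib_left sum.swap[of _ S])
  also have "\<dots> = mat_sum q c (\<lambda>b. G * f b) S $$ (i, j)"
    using assms(1) ij by (auto simp: scalar_prod_def atLeast0LessThan intro!: sum.cong dest!: assms(3))
  finally show "(G * mat_sum r c f S) $$ (i, j) = mat_sum q c (\<lambda>b. G * f b) S $$ (i, j)" .
qed (use assms in simp_all)

definition mat_conv ::
    "nat \<Rightarrow> nat \<Rightarrow> (int \<Rightarrow> 'a :: semiring_0 mat) \<Rightarrow> (int \<Rightarrow> 'a mat) \<Rightarrow> int \<Rightarrow> 'a mat" where
  "mat_conv r c f g k = mat_sum r c (\<lambda>b. f (k - b) * g b) {0..k}"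

lemma mat_conv_carrier [simp]: "mat_conv r c f g k \<in> carrier_mat r c"
  by (simp add: mat_conv_def)

lemma mat_conv_neg: "k < 0 \<Longrightarrow> mat_conv r c f g k = 0\<^sub>m r c"
  by (simp add: mat_conv_def)

lemma mat_conv_split_last:
  assumes "0 \<le> k" "f 0 * g k \<in> carrier_mat r c"
  shows "mat_conv r c f g k = f 0 * g k + mat_sum r c (\<lambda>b. f (k - b) * g b) {0..<k}"
proof -
  have "{0..k} = insert k {0..<k}" using assms(1) by auto
  then show ?thesis unfolding mat_conv_def using assms(2) by (simp add: mat_sum_insert)
qed

lemma linear_recurrence_mat_sum:
  fixes A :: "'a :: semiring_1 mat" and x w :: "int \<Rightarrow> 'a mat"
  assumes A: "A \<in> carrier_mat n n" and w: "\<And>k. w k \<in> carrier_mat n m"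
    and x0: "x 0 = 0\<^sub>m n m" and step: "\<And>k. 0 \<le> k \<Longrightarrow> x (k + 1) = A * x k + w k"
    and "0 \<le> K"
  shows "x K = mat_sum n m (\<lambda>b. A ^\<^sub>m nat (K - 1 - b) * w b) {0..<K}"
  using \<open>0 \<le> K\<close>
proof (induction K rule: int_ge_induct)
  case (step K)
  let ?S = "\<lambda>K. mat_sum n m (\<lambda>b. A ^\<^sub>m nat (K - 1 - b) * w b) {0..<K}"
  have Aw: "\<And>j b. A ^\<^sub>m j * w b \<in> carrier_mat n m"
    using mult_carrier_mat[OF pow_carrier_mat[OF A] w] .
  have pow: "A * (A ^\<^sub>m nat (K - 1 - b) * w b) = A ^\<^sub>m nat (K + 1 - 1 - b) * w b" if "b < K" for b
    using pow_mat_Suc_left[OF A, of "nat (K - 1 - b)"] that A w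
    by (simp add: Suc_nat_eq_nat_zadd1 add.commute assoc_mult_mat[OF A _ w, symmetric])
  have "x (K + 1) = A * ?S K + w K"
    using step by (simp add: assms(4))
  also have "A * ?S K = mat_sum n m (\<lambda>b. A ^\<^sub>m nat (K + 1 - 1 - b) * w b) {0..<K}"
    using pow by (subst mult_mat_sum[OF A _ Aw]) (auto intro: mat_sum_cong)
  also have "\<dots> + w K = w K + mat_sum n m (\<lambda>b. A ^\<^sub>m nat (K + 1 - 1 - b) * w b) {0..<K}"
    using comm_add_mat[OF mat_sum_carrier w] .
  also have "\<dots> = ?S (K + 1)"
  proof -
    have "{0..<K + 1} = insert K {0..<K}" using step.hyps by auto
    then have "?S (K + 1) = A ^\<^sub>m nat (K + 1 - 1 - K) * w K
        + mat_sum n m (\<lambda>b. A ^\<^sub>m nat (K + 1 - 1 - b) * w b) {0..<K}"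
      by (simp only:) (rule mat_sum_insert, simp, simp, rule Aw)
    moreover have "A ^\<^sub>m nat (K + 1 - 1 - K) * w K = w K" using A left_mult_one_mat[OF w] by simp
    ultimately show ?thesis by simp
  qed
  finally show ?case .
qed (simp add: x0)

lemma mod_less_of_less_mult: "i < k * r \<Longrightarrow> i mod r < (r :: nat)"
  by (cases "r = 0") auto

lemma blk_toeplitz_carrier [simp]: "blk_toeplitz nr nc d r c f \<in> carrier_mat (nr * r) (nc * c)"
  and dim_blk_toeplitz [simp]:
    "dim_row (blk_toeplitz nr nc d r c f) = nr * r" "dim_col (blk_toeplitz nr nc d r c f) = nc * c"
  by (simp_all add: blk_toeplitz_def)

lemma index_blk_toeplitz:
  "i < nr * r \<Longrightarrow> j < nc * c \<Longrightarrow>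
    blk_toeplitz nr nc d r c f $$ (i, j) = f (d + int (i div r) - int (j div c)) $$ (i mod r, j mod c)"
  by (simp add: blk_toeplitz_def)

lemma blk_toeplitz_add:
  assumes "\<And>k. f k \<in> carrier_mat r c" "\<And>k. g k \<in> carrier_mat r c"
  shows "blk_toeplitz nr nc d r c f + blk_toeplitz nr nc d r c g = blk_toeplitz nr nc d r c (\<lambda>k. f k + g k)"
proof (rule eq_matI)
  fix i j assume "i < dim_row (blk_toeplitz nr nc d r c (\<lambda>k. f k + g k))"
    "j < dim_col (blk_toeplitz nr nc d r c (\<lambda>k. f k + g k))"
  moreover from this have "i mod r < r" "j mod c < c" by (simp_all add: mod_less_of_less_mult)
  ultimately show "(blk_toeplitz nr nc d r c f + blk_toeplitz nr nc d r c g) $$ (i, j) =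
      blk_toeplitz nr nc d r c (\<lambda>k. f k + g k) $$ (i, j)"
    using assms[of "d + int (i div r) - int (j div c)"] by (simp add: index_blk_toeplitz)
qed simp_all

lemma index_blk_toeplitz_mult:
  assumes f: "\<And>k. f k \<in> carrier_mat r q" and g: "\<And>k. g k \<in> carrier_mat q c"
    and i: "i < nr * r" and j: "j < nc * c"
  shows "(blk_toeplitz nr nk d1 r q f * blk_toeplitz nk nc d2 q c g) $$ (i, j) =
    (\<Sum>t<nk. (f (d1 + int (i div r) - int t) * g (d2 + int t - int (j div c))) $$ (i mod r, j mod c))"
proof -
  let ?F = "blk_toeplitz nr nk d1 r q f" and ?G = "blk_toeplitz nk nc d2 q c g"
  have r: "i mod r < r" and c: "j mod c < c"
    using i j by (simp_all add: mod_less_of_less_mult)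
  have "(?F * ?G) $$ (i, j) = (\<Sum>x<nk * q. ?F $$ (i, x) * ?G $$ (x, j))"
    using i j by (simp add: scalar_prod_def atLeast0LessThan)
  also have "\<dots> = (\<Sum>t<nk. \<Sum>x\<in>{t * q..<t * q + q}. ?F $$ (i, x) * ?G $$ (x, j))"
    by (rule sum.nat_group[symmetric])
  also have "\<dots> = (\<Sum>t<nk. \<Sum>u<q. ?F $$ (i, t * q + u) * ?G $$ (t * q + u, j))"
  proof (rule sum.cong[OF refl])
    fix t
    show "(\<Sum>x\<in>{t * q..<t * q + q}. ?F $$ (i, x) * ?G $$ (x, j)) =
        (\<Sum>u<q. ?F $$ (i, t * q + u) * ?G $$ (t * q + u, j))"
      using sum.shift_bounds_nat_ivl[of "\<lambda>x. ?F $$ (i, x) * ?G $$ (x, j)" 0 "t * q" q]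
      by (simp add: add.commute atLeast0LessThan)
  qed
  also have "\<dots> = (\<Sum>t<nk.
      (f (d1 + int (i div r) - int t) * g (d2 + int t - int (j div c))) $$ (i mod r, j mod c))"
  proof (rule sum.cong[OF refl])
    fix t assume "t \<in> {..<nk}"
    then have "Suc t * q \<le> nk * q" by (intro mult_le_mono1) simp
    then have "t * q + u < nk * q" if "u < q" for u
      using that by simp
    then show "(\<Sum>u<q. ?F $$ (i, t * q + u) * ?G $$ (t * q + u, j)) =
        (f (d1 + int (i div r) - int t) * g (d2 + int t - int (j div c))) $$ (i mod r, j mod c)"
      using i j r c f[of "d1 + int (i div r) - int t"] g[of "d2 + int t - int (j div c)"]
      by (auto simp: index_blk_toeplitz scalar_prod_def atLeast0LessThan intro!: sum.cong)
  qed
  finally show ?thesis .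
qed

lemma blk_toeplitz_mult_causal:
  assumes f: "\<And>k. f k \<in> carrier_mat r q" and g: "\<And>k. g k \<in> carrier_mat q c"
    and f_neg: "\<And>k. k < 0 \<Longrightarrow> f k = 0\<^sub>m r q"
    and g_neg: "\<And>k. k < 0 \<Longrightarrow> g k = 0\<^sub>m q c"
    and "d + nr \<le> nk"
  shows "blk_toeplitz nr nk (int d) r q f * blk_toeplitz nk nc 0 q c g =
    blk_toeplitz nr nc (int d) r c (mat_conv r c f g)"
proof (rule eq_matI)
  fix i j assume "i < dim_row (blk_toeplitz nr nc (int d) r c (mat_conv r c f g))"
    "j < dim_col (blk_toeplitz nr nc (int d) r c (mat_conv r c f g))"
  then have i: "i < nr * r" and j: "j < nc * c" by simp_all
  have r: "i mod r < r" and c: "j mod c < c"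
    using i j by (simp_all add: mod_less_of_less_mult)
  have l: "i div r < nr" using i by (simp add: less_mult_imp_div_less)
  define K where "K = int d + int (i div r) - int (j div c)"
  define h where "h b = (f (K - b) * g b) $$ (i mod r, j mod c)" for b
  have h_out: "h b = 0" if "b \<notin> {0..K}" for b
  proof (cases "b < 0")
    case True
    then show ?thesis using f[of "K - b"] r c by (simp add: h_def g_neg)
  next
    case False
    then have "K - b < 0" using that by simp
    then show ?thesis using g[of b] r c by (simp add: h_def f_neg)
  qed
  let ?shift = "\<lambda>t. int t - int (j div c)"
  have "(blk_toeplitz nr nk (int d) r q f * blk_toeplitz nk nc 0 q c g) $$ (i, j) = (\<Sum>t<nk. h (?shift t))"
    unfolding index_blk_toeplitz_mult[OF f g i j] h_def K_def by (simp add: algebra_simps)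
  also have "\<dots> = sum h (?shift ` {..<nk})"
    by (simp add: sum.reindex inj_on_def)
  also have "\<dots> = sum h {0..K}"
  proof (rule sum.mono_neutral_right)
    show "{0..K} \<subseteq> ?shift ` {..<nk}"
    proof
      fix b assume "b \<in> {0..K}"
      then have "b = ?shift (nat (b + int (j div c)))" and "nat (b + int (j div c)) < nk"
        using l \<open>d + nr \<le> nk\<close> by (auto simp: K_def)
      then show "b \<in> ?shift ` {..<nk}" by blast
    qed
  qed (use h_out in auto)
  also have "\<dots> = blk_toeplitz nr nc (int d) r c (mat_conv r c f g) $$ (i, j)"
    using i j r c by (simp add: index_blk_toeplitz mat_conv_def h_def K_def)
  finally show "(blk_toeplitz nr nk (int d) r q f * blk_toeplitz nk nc 0 q c g) $$ (i, j) =
      blk_toeplitz nr nc (int d) r c (mat_conv r c f g) $$ (i, j)" .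
qed simp_all

lemma blk_toeplitz_mult_add_mult:
  assumes f1: "\<And>k. f1 k \<in> carrier_mat r q1" and g1: "\<And>k. g1 k \<in> carrier_mat q1 c"
    and f2: "\<And>k. f2 k \<in> carrier_mat r q2" and g2: "\<And>k. g2 k \<in> carrier_mat q2 c"
    and "\<And>k. k < 0 \<Longrightarrow> f1 k = 0\<^sub>m r q1" "\<And>k. k < 0 \<Longrightarrow> g1 k = 0\<^sub>m q1 c"
    and "\<And>k. k < 0 \<Longrightarrow> f2 k = 0\<^sub>m r q2" "\<And>k. k < 0 \<Longrightarrow> g2 k = 0\<^sub>m q2 c"
    and "d + nr \<le> nk"
    and conv: "\<And>k. mat_conv r c f1 g1 k + mat_conv r c f2 g2 k = h k"
  shows "blk_toeplitz nr nk (int d) r q1 f1 * blk_toeplitz nk nc 0 q1 c g1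
       + blk_toeplitz nr nk (int d) r q2 f2 * blk_toeplitz nk nc 0 q2 c g2
       = blk_toeplitz nr nc (int d) r c h"
  using assms by (simp add: blk_toeplitz_mult_causal blk_toeplitz_add)

lemma four_block_mat_mult_vstack:
  assumes "P1 \<in> carrier_mat r1 c1" "P2 \<in> carrier_mat r1 c2" "P3 \<in> carrier_mat r2 c1"
    "P4 \<in> carrier_mat r2 c2" "U \<in> carrier_mat c1 k" "V \<in> carrier_mat c2 k"
  shows "four_block_mat P1 P2 P3 P4 * vstack U V = vstack (P1 * U + P2 * V) (P3 * U + P4 * V)"
proof -
  have "dim_row U = c1" "dim_row V = c2" using assms by auto
  then show ?thesis
    unfolding vstack_def using assms by (subst mult_four_block_mat[OF assms(1-5) _ assms(6)]) auto
qed

locale gain_pairs =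
  fixes n m p :: nat and A B C D F1 F2 L1 L2 :: "real mat"
  assumes A: "A \<in> carrier_mat n n" and B: "B \<in> carrier_mat n p"
    and C: "C \<in> carrier_mat m n" and D: "D \<in> carrier_mat m p"
    and F1: "F1 \<in> carrier_mat p n" and F2: "F2 \<in> carrier_mat p n"
    and L1: "L1 \<in> carrier_mat n m" and L2: "L2 \<in> carrier_mat n m"
begin

abbreviation "Rbar \<equiv> Rbk m p A B C F1 F2 L1 L2"
abbreviation "R \<equiv> Rk m A C L1 L2"

lemma AF_carrier: "F \<in> carrier_mat p n \<Longrightarrow> AF A B F \<in> carrier_mat n n"
  unfolding AF_def using A B by simp

lemma CF_carrier: "F \<in> carrier_mat p n \<Longrightarrow> CF C D F \<in> carrier_mat m n"
  unfolding CF_def using C D by simp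

lemma observer_mat_carrier: "A - L2 * C \<in> carrier_mat n n"
  by (rule minus_carrier_mat[OF mult_carrier_mat[OF L2 C]])

lemma Mk_carrier: "F \<in> carrier_mat p n \<Longrightarrow> Mk p A B F k \<in> carrier_mat p p"
  unfolding Mk_def using B by (simp add: mult_carrier_mat[OF mult_carrier_mat[OF _ pow_carrier_mat[OF AF_carrier]]])

lemma Nk_carrier: "F \<in> carrier_mat p n \<Longrightarrow> Nk m p A B C D F k \<in> carrier_mat m p"
  unfolding Nk_def using B D
  by (simp add: mult_carrier_mat[OF mult_carrier_mat[OF CF_carrier pow_carrier_mat[OF AF_carrier]]])

lemma Yhk_carrier:
  "F \<in> carrier_mat p n \<Longrightarrow> L \<in> carrier_mat n m \<Longrightarrow> Yhk m p A B F L k \<in> carrier_mat p m"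
  unfolding Yhk_def by (simp add: mult_carrier_mat[OF mult_carrier_mat[OF _ pow_carrier_mat[OF AF_carrier]]])

lemma Xhk_carrier:
  "F \<in> carrier_mat p n \<Longrightarrow> L \<in> carrier_mat n m \<Longrightarrow> Xhk m A B C D F L k \<in> carrier_mat m m"
  unfolding Xhk_def
  by (simp add: mult_carrier_mat[OF mult_carrier_mat[OF CF_carrier pow_carrier_mat[OF AF_carrier]]])

lemma R_carrier: "R k \<in> carrier_mat m m"
  unfolding Rk_def using minus_carrier_mat[OF L2, of L1]
  by (simp add: mult_carrier_mat[OF mult_carrier_mat[OF C pow_carrier_mat[OF observer_mat_carrier]]])

lemma Rbar_carrier: "Rbar k \<in> carrier_mat p m"
  unfolding Rbk_def using F1 L1 minus_carrier_mat[OF F2, of F1] minus_carrier_mat[OF L2, of L1]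
  by (simp add: mult_carrier_mat[OF mult_carrier_mat[OF _ pow_carrier_mat[OF AF_carrier]]]
      mult_carrier_mat[OF mult_carrier_mat[OF F2 pow_carrier_mat[OF observer_mat_carrier]]])

abbreviation "Z1 k \<equiv> AF A B F1 ^\<^sub>m k * L1"
abbreviation "Z2 k \<equiv> (A - L2 * C) ^\<^sub>m k * (L1 - L2)"

lemma Z1_carrier: "Z1 k \<in> carrier_mat n m"
  using L1 by (simp add: mult_carrier_mat[OF pow_carrier_mat[OF AF_carrier[OF F1]]])

lemma Z2_carrier: "Z2 k \<in> carrier_mat n m"
  using minus_carrier_mat[OF L2, of L1] by (simp add: mult_carrier_mat[OF pow_carrier_mat[OF observer_mat_carrier]])

(* The state x_k of the proof idea, defined by its closed form; driven_state_eq_sum recovers the sum. *)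
definition driven_state :: "int \<Rightarrow> real mat" where
  "driven_state k = (if k \<ge> 1 then Z1 (nat (k - 1)) - Z2 (nat (k - 1)) else 0\<^sub>m n m)"

lemma driven_state_succ: "driven_state (int k + 1) = Z1 k - Z2 k"
  by (simp add: driven_state_def)

lemma AF_mult:
  "F \<in> carrier_mat p n \<Longrightarrow> X \<in> carrier_mat n q \<Longrightarrow> AF A B F * X = A * X + B * (F * X)"
  unfolding AF_def using A B by (simp add: add_mult_distrib_mat[of A n n _ X q] assoc_mult_mat[OF B])

lemma CF_mult:
  "F \<in> carrier_mat p n \<Longrightarrow> X \<in> carrier_mat n q \<Longrightarrow> CF C D F * X = C * X + D * (F * X)"
  unfolding CF_def using C D by (simp add: add_mult_distrib_mat[of C m n _ X q] assoc_mult_mat[OF D])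

lemma observer_mat_mult: "X \<in> carrier_mat n q \<Longrightarrow> (A - L2 * C) * X = A * X - L2 * (C * X)"
  using A C L2 by (simp add: minus_mult_distrib_mat[of A n n _ X q] assoc_mult_mat[OF L2 C])

lemma Rbar_succ: "Rbar (int k + 1) = F1 * Z1 k - F2 * Z1 k + F2 * Z2 k"
proof -
  have "Rbar (int k + 1) = (F1 - F2) * AF A B F1 ^\<^sub>m k * L1 + F2 * (A - L2 * C) ^\<^sub>m k * (L1 - L2)"
    by (simp add: Rbk_def)
  also have "\<dots> = (F1 - F2) * Z1 k + F2 * Z2 k"
    using assoc_mult_mat[OF minus_carrier_mat[OF F2] pow_carrier_mat[OF AF_carrier[OF F1]] L1]
      assoc_mult_mat[OF F2 pow_carrier_mat[OF observer_mat_carrier] minus_carrier_mat[OF L2]]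
    by simp
  also have "(F1 - F2) * Z1 k = F1 * Z1 k - F2 * Z1 k"
    using F1 F2 Z1_carrier by (rule minus_mult_distrib_mat)
  finally show ?thesis .
qed

lemma R_succ: "R (int k + 1) = C * Z2 k"
  using assoc_mult_mat[OF C pow_carrier_mat[OF observer_mat_carrier] minus_carrier_mat[OF L2]]
  by (simp add: Rk_def)

lemma driven_state_step:
  "driven_state (int k + 1) = AF A B F2 * driven_state (int k) + (B * Rbar (int k) + L2 * R (int k))"
proof (cases k)
  case 0
  then show ?thesis
    using AF_carrier[OF F1] AF_carrier[OF F2] B L1 L2 left_mult_one_mat[OF L1]
    by (intro eq_matI) (simp_all add: driven_state_def Rbk_def Rk_def)
next
  case (Suc k)
  have Z: "Z1 k \<in> carrier_mat n m" "Z2 k \<in> carrier_mat n m" by (rule Z1_carrier Z2_carrier)+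
  have FZ: "F1 * Z1 k \<in> carrier_mat p m" "F2 * Z1 k \<in> carrier_mat p m" "F2 * Z2 k \<in> carrier_mat p m"
    using F1 F2 Z by auto
  have "AF A B F2 * driven_state (int (Suc k)) + (B * Rbar (int (Suc k)) + L2 * R (int (Suc k)))
      = AF A B F2 * (Z1 k - Z2 k) + (B * (F1 * Z1 k - F2 * Z1 k + F2 * Z2 k) + L2 * (C * Z2 k))"
    unfolding of_nat_Suc add.commute[of 1] Rbar_succ R_succ driven_state_succ ..
  also have "\<dots> = (A * Z1 k + B * (F2 * Z1 k)) - (A * Z2 k + B * (F2 * Z2 k))
      + ((B * (F1 * Z1 k) - B * (F2 * Z1 k) + B * (F2 * Z2 k)) + L2 * (C * Z2 k))"
    using Z FZ B minus_carrier_mat[OF FZ(2), of "F1 * Z1 k"]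
    by (simp add: mult_minus_distrib_mat[OF AF_carrier[OF F2]] AF_mult[OF F2] mult_add_distrib_mat[OF B]
        mult_minus_distrib_mat[OF B])
  also have "\<dots> = (A * Z1 k + B * (F1 * Z1 k)) - (A * Z2 k - L2 * (C * Z2 k))"
  proof -
    \<comment> \<open>Stated for opaque summands, so that \<open>eq_matI\<close> does not expand the products entrywise.\<close>
    have "(a1 + b1) - (a2 + b2) + ((c - b1 + b2) + d) = (a1 + c) - (a2 - d)"
      if "a1 \<in> carrier_mat n m" "a2 \<in> carrier_mat n m" "b1 \<in> carrier_mat n m"
        "b2 \<in> carrier_mat n m" "c \<in> carrier_mat n m" "d \<in> carrier_mat n m"
      for a1 a2 b1 b2 c d :: "real mat"
      using that by (intro eq_matI) simp_all
    from this[OF mult_carrier_mat[OF A Z(1)] mult_carrier_mat[OF A Z(2)] mult_carrier_mat[OF B FZ(2)]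
        mult_carrier_mat[OF B FZ(3)] mult_carrier_mat[OF B FZ(1)] mult_carrier_mat[OF L2 mult_carrier_mat[OF C Z(2)]]]
    show ?thesis .
  qed
  also have "\<dots> = AF A B F1 * Z1 k - (A - L2 * C) * Z2 k"
    using Z by (simp add: AF_mult[OF F1] observer_mat_mult)
  also have "\<dots> = Z1 (Suc k) - Z2 (Suc k)"
    unfolding pow_mat_Suc_left[OF AF_carrier[OF F1]] pow_mat_Suc_left[OF observer_mat_carrier]
    using assoc_mult_mat[OF AF_carrier[OF F1] pow_carrier_mat[OF AF_carrier[OF F1]] L1]
      assoc_mult_mat[OF observer_mat_carrier pow_carrier_mat[OF observer_mat_carrier] minus_carrier_mat[OF L2]]
    by simp
  also have "\<dots> = driven_state (int (Suc k) + 1)"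
    by (rule driven_state_succ[symmetric])
  finally show ?thesis using Suc by simp
qed

lemma driven_state_eq_sum:
  assumes "0 \<le> K"
  shows "driven_state K =
    mat_sum n m (\<lambda>b. AF A B F2 ^\<^sub>m nat (K - 1 - b) * (B * Rbar b + L2 * R b)) {0..<K}"
proof (rule linear_recurrence_mat_sum[OF AF_carrier[OF F2] _ _ _ assms])
  show "B * Rbar k + L2 * R k \<in> carrier_mat n m" for k
    using mult_carrier_mat[OF L2 R_carrier] by simp
  show "driven_state 0 = 0\<^sub>m n m"
    by (simp add: driven_state_def)
  show "driven_state (k + 1) = AF A B F2 * driven_state k + (B * Rbar k + L2 * R k)" if "0 \<le> k" for k
    using driven_state_step[of "nat k"] that by simp
qed

lemma mat_conv_driven_state:
  assumes G: "G \<in> carrier_mat q n"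
    and \<Phi>: "\<And>k. \<Phi> k \<in> carrier_mat q p" and \<Psi>: "\<And>k. \<Psi> k \<in> carrier_mat q m"
    and \<Phi>_pos: "\<And>k. 1 \<le> k \<Longrightarrow> \<Phi> k = G * AF A B F2 ^\<^sub>m nat (k - 1) * B"
    and \<Psi>_pos: "\<And>k. 1 \<le> k \<Longrightarrow> \<Psi> k = G * AF A B F2 ^\<^sub>m nat (k - 1) * L2"
    and K: "0 \<le> K"
  shows "mat_conv q m \<Phi> Rbar K + mat_conv q m \<Psi> R K =
    \<Phi> 0 * Rbar K + \<Psi> 0 * R K + G * driven_state K"
proof -
  define P where "P b = AF A B F2 ^\<^sub>m nat (K - 1 - b)" for b
  define W where "W b = B * Rbar b + L2 * R b" for b
  have P_carrier: "P b \<in> carrier_mat n n" for b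
    unfolding P_def using AF_carrier[OF F2] by simp
  have W_carrier: "W b \<in> carrier_mat n m" for b
    unfolding W_def using mult_carrier_mat[OF L2 R_carrier] by simp
  have summand: "\<Phi> (K - b) * Rbar b + \<Psi> (K - b) * R b = G * (P b * W b)" if "b \<in> {0..<K}" for b
  proof -
    have GP: "G * P b \<in> carrier_mat q n" using G P_carrier by simp
    have "\<Phi> (K - b) * Rbar b + \<Psi> (K - b) * R b = G * P b * B * Rbar b + G * P b * L2 * R b"
      using that by (simp add: \<Phi>_pos \<Psi>_pos P_def diff_diff_eq add.commute)
    also have "\<dots> = G * P b * W b"
      unfolding W_def
      using mult_add_distrib_mat[OF GP mult_carrier_mat[OF B Rbar_carrier] mult_carrier_mat[OF L2 R_carrier]]
        assoc_mult_mat[OF GP B Rbar_carrier] assoc_mult_mat[OF GP L2 R_carrier]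
      by simp
    also have "\<dots> = G * (P b * W b)"
      using G P_carrier W_carrier by (rule assoc_mult_mat)
    finally show ?thesis .
  qed
  define S1 where "S1 = mat_sum q m (\<lambda>b. \<Phi> (K - b) * Rbar b) {0..<K}"
  define S2 where "S2 = mat_sum q m (\<lambda>b. \<Psi> (K - b) * R b) {0..<K}"
  have "mat_conv q m \<Phi> Rbar K + mat_conv q m \<Psi> R K = (\<Phi> 0 * Rbar K + S1) + (\<Psi> 0 * R K + S2)"
    unfolding S1_def S2_def
    using mult_carrier_mat[OF \<Phi> Rbar_carrier] mult_carrier_mat[OF \<Psi> R_carrier]
    by (simp add: mat_conv_split_last[OF K])
  also have "\<dots> = \<Phi> 0 * Rbar K + \<Psi> 0 * R K + (S1 + S2)"
    using mult_carrier_mat[OF \<Phi>[of 0] Rbar_carrier[of K]] mult_carrier_mat[OF \<Psi>[of 0] R_carrier[of K]]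
    unfolding S1_def S2_def by (intro eq_matI) simp_all
  also have "S1 + S2 = mat_sum q m (\<lambda>b. G * (P b * W b)) {0..<K}"
    unfolding S1_def S2_def
    using mult_carrier_mat[OF \<Phi> Rbar_carrier] mult_carrier_mat[OF \<Psi> R_carrier]
    by (simp add: mat_sum_add) (rule mat_sum_cong[OF summand])
  also have "\<dots> = G * mat_sum n m (\<lambda>b. P b * W b) {0..<K}"
    using mult_carrier_mat[OF P_carrier W_carrier] by (simp add: mult_mat_sum[OF G])
  also have "\<dots> = G * driven_state K"
    unfolding driven_state_eq_sum[OF K] P_def W_def ..
  finally show ?thesis .
qed

lemma mat_conv_Mk_Yhk:
  "mat_conv p m (Mk p A B F2) Rbar K + mat_conv p m (Yhk m p A B F2 L2) R K = Yhk m p A B F1 L1 K"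
proof (cases "K < 0")
  case True
  then show ?thesis by (simp add: mat_conv_neg Yhk_def)
next
  case False
  then have K: "0 \<le> K" by simp
  have "mat_conv p m (Mk p A B F2) Rbar K + mat_conv p m (Yhk m p A B F2 L2) R K
      = Mk p A B F2 0 * Rbar K + Yhk m p A B F2 L2 0 * R K + F2 * driven_state K"
    by (rule mat_conv_driven_state[OF F2 Mk_carrier[OF F2] Yhk_carrier[OF F2 L2] _ _ K])
      (simp_all add: Mk_def Yhk_def)
  also have "\<dots> = Yhk m p A B F1 L1 K"
  proof (cases "K = 0")
    case True
    then show ?thesis using F2 by (simp add: Mk_def Yhk_def Rbk_def Rk_def driven_state_def)
  next
    case False
    define k where "k = nat (K - 1)"
    have Kk: "K = int k + 1" using K False by (simp add: k_def)
    have FZ: "F1 * Z1 k \<in> carrier_mat p m" "F2 * Z1 k \<in> carrier_mat p m" "F2 * Z2 k \<in> carrier_mat p m"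
      using F1 F2 Z1_carrier Z2_carrier by auto
    have "Mk p A B F2 0 * Rbar K + Yhk m p A B F2 L2 0 * R K + F2 * driven_state K = Rbar K + F2 * driven_state K"
      using left_mult_one_mat[OF Rbar_carrier] left_mult_zero_mat[OF R_carrier] Rbar_carrier
      by (simp add: Mk_def Yhk_def)
    also have "\<dots> = (F1 * Z1 k - F2 * Z1 k + F2 * Z2 k) + (F2 * Z1 k - F2 * Z2 k)"
      by (simp add: Kk Rbar_succ driven_state_succ mult_minus_distrib_mat[OF F2 Z1_carrier Z2_carrier])
    also have "\<dots> = F1 * Z1 k"
    proof -
      have "(x1 - x2 + x3) + (x2 - x3) = x1"
        if "x1 \<in> carrier_mat p m" "x2 \<in> carrier_mat p m" "x3 \<in> carrier_mat p m" for x1 x2 x3 :: "real mat"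
        using that by (intro eq_matI) simp_all
      from this[OF FZ] show ?thesis .
    qed
    also have "\<dots> = Yhk m p A B F1 L1 K"
      using assoc_mult_mat[OF F1 pow_carrier_mat[OF AF_carrier[OF F1]] L1] by (simp add: Kk Yhk_def)
    finally show ?thesis .
  qed
  finally show ?thesis .
qed

lemma mat_conv_Nk_Xhk:
  "mat_conv m m (Nk m p A B C D F2) Rbar K + mat_conv m m (Xhk m A B C D F2 L2) R K = Xhk m A B C D F1 L1 K"
proof (cases "K < 0")
  case True
  then show ?thesis by (simp add: mat_conv_neg Xhk_def)
next
  case False
  then have K: "0 \<le> K" by simp
  have "mat_conv m m (Nk m p A B C D F2) Rbar K + mat_conv m m (Xhk m A B C D F2 L2) R K
      = Nk m p A B C D F2 0 * Rbar K + Xhk m A B C D F2 L2 0 * R K + CF C D F2 * driven_state K"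
    by (rule mat_conv_driven_state[OF CF_carrier[OF F2] Nk_carrier[OF F2] Xhk_carrier[OF F2 L2] _ _ K])
      (simp_all add: Nk_def Xhk_def)
  also have "\<dots> = Xhk m A B C D F1 L1 K"
  proof (cases "K = 0")
    case True
    then show ?thesis using D CF_carrier[OF F2] by (simp add: Nk_def Xhk_def Rbk_def Rk_def driven_state_def)
  next
    case False
    define k where "k = nat (K - 1)"
    have Kk: "K = int k + 1" using K False by (simp add: k_def)
    have Z: "Z1 k \<in> carrier_mat n m" "Z2 k \<in> carrier_mat n m" by (rule Z1_carrier Z2_carrier)+
    have FZ: "F1 * Z1 k \<in> carrier_mat p m" "F2 * Z1 k \<in> carrier_mat p m" "F2 * Z2 k \<in> carrier_mat p m"
      using F1 F2 Z by auto
    have "Nk m p A B C D F2 0 * Rbar K + Xhk m A B C D F2 L2 0 * R K + CF C D F2 * driven_state K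
        = (D * (F1 * Z1 k) - D * (F2 * Z1 k) + D * (F2 * Z2 k)) + C * Z2 k
          + ((C * Z1 k + D * (F2 * Z1 k)) - (C * Z2 k + D * (F2 * Z2 k)))"
      using FZ Z C D minus_carrier_mat[OF FZ(2), of "F1 * Z1 k"]
      by (simp add: Kk Nk_def Xhk_def Rbar_succ R_succ driven_state_succ mult_add_distrib_mat[OF D]
          mult_minus_distrib_mat[OF D] mult_minus_distrib_mat[OF CF_carrier[OF F2]] CF_mult[OF F2])
    also have "\<dots> = C * Z1 k + D * (F1 * Z1 k)"
    proof -
      have "(x1 - x2 + x3) + c2 + ((c1 + x2) - (c2 + x3)) = c1 + x1"
        if "x1 \<in> carrier_mat m m" "x2 \<in> carrier_mat m m" "x3 \<in> carrier_mat m m"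
          "c1 \<in> carrier_mat m m" "c2 \<in> carrier_mat m m" for x1 x2 x3 c1 c2 :: "real mat"
        using that by (intro eq_matI) simp_all
      from this[OF mult_carrier_mat[OF D FZ(1)] mult_carrier_mat[OF D FZ(2)] mult_carrier_mat[OF D FZ(3)]
          mult_carrier_mat[OF C Z(1)] mult_carrier_mat[OF C Z(2)]]
      show ?thesis .
    qed
    also have "\<dots> = Xhk m A B C D F1 L1 K"
      using assoc_mult_mat[OF CF_carrier[OF F1] pow_carrier_mat[OF AF_carrier[OF F1]] L1]
      by (simp add: Kk Xhk_def CF_mult[OF F1 Z(1)])
    finally show ?thesis .
  qed
  finally show ?thesis .
qed

end

theorem lemma5:
  fixes n m p s :: nat and A B C D F1 F2 L1 L2 :: "real mat"
  assumes "n \<ge> 1"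
    and "minimal_realization n p m A B C D"
    and "F1 \<in> carrier_mat p n" and "F2 \<in> carrier_mat p n"
    and "L1 \<in> carrier_mat n m" and "L2 \<in> carrier_mat n m"
    and "s \<ge> 1"
  shows "vstack (Yhat n m p s A B F1 L1) (Xhat n m s A B C D F1 L1) =
         four_block_mat (Ms n p s A B F2) (Yhat n m p s A B F2 L2)
                        (Ns n m p s A B C D F2) (Xhat n m s A B C D F2 L2)
         * vstack (blk_toeplitz (s + n) (s + n) 0 p m (Rbk m p A B C F1 F2 L1 L2))
                  (blk_toeplitz (s + n) (s + n) 0 m m (Rk m A C L1 L2))"
proof -
  interpret gain_pairs n m p A B C D F1 F2 L1 L2
    using assms(2-6) by unfold_locales (simp_all add: minimal_realization_def)
  let ?Rbar = "blk_toeplitz (s + n) (s + n) 0 p m Rbar" and ?R = "blk_toeplitz (s + n) (s + n) 0 m m R"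
  have top: "Ms n p s A B F2 * ?Rbar + Yhat n m p s A B F2 L2 * ?R = Yhat n m p s A B F1 L1"
    unfolding Ms_def Yhat_def
    by (rule blk_toeplitz_mult_add_mult[OF Mk_carrier[OF F2] Rbar_carrier Yhk_carrier[OF F2 L2] R_carrier
          _ _ _ _ _ mat_conv_Mk_Yhk]) (simp_all add: Mk_def Yhk_def Rbk_def Rk_def)
  have bottom: "Ns n m p s A B C D F2 * ?Rbar + Xhat n m s A B C D F2 L2 * ?R = Xhat n m s A B C D F1 L1"
    unfolding Ns_def Xhat_def
    by (rule blk_toeplitz_mult_add_mult[OF Nk_carrier[OF F2] Rbar_carrier Xhk_carrier[OF F2 L2] R_carrier
          _ _ _ _ _ mat_conv_Nk_Xhk]) (simp_all add: Nk_def Xhk_def Rbk_def Rk_def)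
  have "four_block_mat (Ms n p s A B F2) (Yhat n m p s A B F2 L2) (Ns n m p s A B C D F2)
      (Xhat n m s A B C D F2 L2) * vstack ?Rbar ?R
    = vstack (Ms n p s A B F2 * ?Rbar + Yhat n m p s A B F2 L2 * ?R)
        (Ns n m p s A B C D F2 * ?Rbar + Xhat n m s A B C D F2 L2 * ?R)"
    unfolding Ms_def Yhat_def Ns_def Xhat_def by (rule four_block_mat_mult_vstack; rule blk_toeplitz_carrier)
  then show ?thesis
    unfolding top bottom ..
qed

end
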